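(* Let $P \in S$ with $P \notin K$. Then the centralizer $C_S(P)$ is commutative.
   Context: Standing conventions: $K$ is a field, $R = K[y]$, $\sigma$ is a $K$-algebra endomorphism of $R$ with $\deg_y(\sigma(y)) > 1$, and $\delta$ is a $K$-linear $\sigma$-derivation of $R$ ($\delta(ab) = \sigma(a)\delta(b) + \delta(a)b$). $S = R[x;\sigma,\delta]$ is the Ore extension (polynomials $\sum r_i x^i$, $r_i\in R$, with $xr = \sigma(r)x + \delta(r)$). $C_S(P)$ is the set of elements of $S$ commuting with $P$. *)

theory Defs
  imports "HOL-Computational_Algebra.Polynomial"
begin

text \<open>R = K[y] is 'a poly; S = R[x; sigma, delta] is represented by 'a poly poly,
  the element  sum_i r_i x^i  being the polynomial with coefficients r_i (coefficients on the left).\<close>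

definition K_alg_endo :: "('a::field poly \<Rightarrow> 'a poly) \<Rightarrow> bool" where
  "K_alg_endo \<sigma> \<longleftrightarrow>
     (\<forall>a b. \<sigma> (a + b) = \<sigma> a + \<sigma> b) \<and>
     (\<forall>a b. \<sigma> (a * b) = \<sigma> a * \<sigma> b) \<and>
     (\<forall>c a. \<sigma> (smult c a) = smult c (\<sigma> a)) \<and>
     \<sigma> 1 = 1"

definition K_linear_sigma_derivation ::
  "('a::field poly \<Rightarrow> 'a poly) \<Rightarrow> ('a poly \<Rightarrow> 'a poly) \<Rightarrow> bool" where
  "K_linear_sigma_derivation \<sigma> \<delta> \<longleftrightarrow>
     (\<forall>a b. \<delta> (a + b) = \<delta> a + \<delta> b) \<and>
     (\<forall>c a. \<delta> (smult c a) = smult c (\<delta> a)) \<and>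
     (\<forall>a b. \<delta> (a * b) = \<sigma> a * \<delta> b + \<delta> a * b)"

text \<open>Left multiplication by x:  x * (sum r_i x^i) = sum (sigma(r_i) x^(i+1) + delta(r_i) x^i).\<close>
definition ore_xmul ::
  "('a::field poly \<Rightarrow> 'a poly) \<Rightarrow> ('a poly \<Rightarrow> 'a poly) \<Rightarrow> 'a poly poly \<Rightarrow> 'a poly poly" where
  "ore_xmul \<sigma> \<delta> Q = pCons 0 (map_poly \<sigma> Q) + map_poly \<delta> Q"

definition ore_mult ::
  "('a::field poly \<Rightarrow> 'a poly) \<Rightarrow> ('a poly \<Rightarrow> 'a poly) \<Rightarrow> 'a poly poly \<Rightarrow> 'a poly poly \<Rightarrow> 'a poly poly" where
  "ore_mult \<sigma> \<delta> P Q =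
     (\<Sum>i\<le>degree P. map_poly (\<lambda>r. coeff P i * r) ((ore_xmul \<sigma> \<delta> ^^ i) Q))"

definition ore_centralizer ::
  "('a::field poly \<Rightarrow> 'a poly) \<Rightarrow> ('a poly \<Rightarrow> 'a poly) \<Rightarrow> 'a poly poly \<Rightarrow> 'a poly poly set" where
  "ore_centralizer \<sigma> \<delta> P = {Q. ore_mult \<sigma> \<delta> P Q = ore_mult \<sigma> \<delta> Q P}"

end

theory Submission
  imports Defs "HOL-Number_Theory.Cong"
begin

text \<open>
  Since \<open>deg \<sigma>(y) > 1\<close>, \<open>\<sigma>\<close> is injective, so \<open>S\<close> is a domain with additive \<open>x\<close>-degree and
  \<open>lc(PQ) = lc(P) \<sigma>\<^sup>deg P(lc Q)\<close>.  If \<open>Q \<in> C(P)\<close>, comparing leading coefficients of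
  \<open>PQ = QP\<close> gives a twisted equation in \<open>K[y]\<close> whose solutions of a given \<open>x\<close>-degree form a
  space of dimension at most one over \<open>K\<close>; so \<open>C(P)\<close> has dimension at most one in each degree.
  If \<open>deg P = 0\<close> this forces \<open>C(P) \<subseteq> K[y]\<close>.  If \<open>deg P \<ge> 1\<close>, pick \<open>A \<in> C(P)\<close> whose degree
  generates all degrees of \<open>C(P)\<close> modulo \<open>deg P\<close>.  Every element of \<open>C(P)\<close> then reduces modulo
  the commutative algebra \<open>K\<langle>A, P\<rangle>\<close> to bounded degree, and a dimension count yields, for each
  \<open>Z \<in> C(P)\<close>, a nonzero \<open>f \<in> K[P]\<close> with \<open>Zf \<in> K\<langle>A, P\<rangle>\<close>; commutativity of \<open>C(P)\<close> follows
  by cancelling such \<open>f\<close>.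
\<close>

text \<open>Two facts about additive submonoids of \<open>\<nat>\<close>, used to control the possible \<open>x\<close>-degrees of
  elements of a centralizer.  In a submonoid \<open>D\<close> containing a positive \<open>n\<close>, an element \<open>a\<close>
  minimising \<open>gcd a n\<close> has \<open>gcd a n\<close> dividing every element of \<open>D\<close>.\<close>

lemma additive_monoid_gcd_generator:
  fixes D :: "nat set" and n :: nat
  assumes n: "n > 0" and a0: "a0 \<in> D" and zero: "0 \<in> D"
    and add: "\<And>x y. x \<in> D \<Longrightarrow> y \<in> D \<Longrightarrow> x + y \<in> D"
  shows "\<exists>a\<in>D. \<forall>b\<in>D. gcd a n dvd b"
proof -
  have mult: "k * x \<in> D" if "x \<in> D" for k x
    by (induction k) (simp_all add: zero add that)
  obtain a where a: "a \<in> D" and min: "\<And>c. c \<in> D \<Longrightarrow> gcd a n \<le> gcd c n"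
    using ex_has_least_nat[of "\<lambda>x. x \<in> D" a0 "\<lambda>x. gcd x n"] a0 by blast
  have "gcd a n dvd b" if b: "b \<in> D" for b
  proof -
    text \<open>By B\'ezout, \<open>D\<close> contains an element congruent to \<open>gcd a b\<close> modulo \<open>n\<close>.\<close>
    obtain c where c: "c \<in> D" "gcd c n = gcd (gcd a b) n"
    proof (cases "a = 0")
      case True
      then show ?thesis using that b by simp
    next
      case False
      then obtain x y where xy: "a * x = b * y + gcd a b" using bezout_nat by blast
      have "a * x + (y * (n - 1)) * b = gcd a b + (b * y) * n"
        using xy n by (cases n) (simp_all add: algebra_simps)
      moreover have "a * x + (y * (n - 1)) * b \<in> D"
        using mult a b add by (simp add: mult.commute)
      moreover have "gcd (gcd a b + (b * y) * n) n = gcd (gcd a b) n"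
        by (metis gcd.commute gcd_add_mult add.commute)
      ultimately show ?thesis using that by metis
    qed
    have "gcd (gcd a b) n dvd gcd a n"
      by (meson dvd_trans gcd_dvd1 gcd_dvd2 gcd_greatest)
    moreover have "gcd a n \<le> gcd (gcd a b) n" using min[OF c(1)] c(2) by simp
    moreover have "gcd a n > 0" using n by simp
    ultimately have "gcd a n = gcd (gcd a b) n" by (simp add: dvd_imp_le le_antisym)
    then show ?thesis by (metis dvd_trans gcd_dvd1 gcd_dvd2)
  qed
  then show ?thesis using a by blast
qed

lemma split_by_generator:
  fixes a b n :: nat
  assumes n: "n > 0" and dvd: "gcd a n dvd b" and big: "n * a \<le> b"
  shows "\<exists>i j. i < n \<and> b = i * a + j * n"
proof -
  obtain x where "[a * x = b] (mod n)" using cong_solve_dvd_nat[OF dvd] by blast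
  then have "[b = a * x] (mod n)" by (rule cong_sym)
  also have "[a * x = (x mod n) * a] (mod n)"
    by (simp add: cong_def mod_mult_right_eq mult.commute)
  finally have cong: "[b = (x mod n) * a] (mod n)" .
  have "x mod n < n" using n by simp
  then have "(x mod n) * a \<le> b" using big by (meson less_imp_le_nat mult_le_mono1 order_trans)
  then obtain j where "b = j * n + (x mod n) * a" using cong cong_le_nat by blast
  then show ?thesis using \<open>x mod n < n\<close> by (intro exI[of _ "x mod n"] exI[of _ j]) simp
qed

definition kscale :: "'a::field \<Rightarrow> 'a poly poly \<Rightarrow> 'a poly poly" where
  "kscale c u = smult [:c:] u"

lemma kscale_add_right: "kscale c (u + v) = kscale c u + kscale c v"
  and kscale_diff_right: "kscale c (u - v) = kscale c u - kscale c v"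
  and kscale_kscale: "kscale a (kscale b u) = kscale (a * b) u"
  and kscale_minus_left: "kscale (- a) u = - kscale a u"
  and kscale_0_left [simp]: "kscale 0 u = 0"
  and kscale_0_right [simp]: "kscale a 0 = 0"
  and kscale_1 [simp]: "kscale 1 u = u"
  and degree_kscale_le: "degree (kscale a u) \<le> degree u"
  unfolding kscale_def
  by (simp_all add: smult_add_right smult_diff_right mult.commute degree_smult_le
      one_pCons[symmetric] flip: smult_minus_left)

lemma degree_kscale: "a \<noteq> 0 \<Longrightarrow> degree (kscale a u) = degree u"
  by (simp add: kscale_def)

lemma kscale_add_left: "kscale (a + b) u = kscale a u + kscale b u"
  unfolding kscale_def by (metis add_pCons add_0 smult_add_left)

lemma kscale_sum_left: "kscale (\<Sum>i\<in>I. f i) u = (\<Sum>i\<in>I. kscale (f i) u)"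
  by (induction I rule: infinite_finite_induct) (simp_all add: kscale_add_left)

text \<open>Let \<open>V\<close> be a \<open>K\<close>-subspace of \<open>S\<close> in which elements of equal degree
  have proportional leading coefficients.  Then \<open>V\<close> has dimension at most \<open>N\<close> in degrees \<open>< N\<close>,
  so any more than \<open>N\<close> such elements are \<open>K\<close>-linearly dependent.  In the induction step, a
  pivot \<open>r k\<close> of degree \<open>N\<close> is used to push all other elements below degree \<open>N\<close>; the next lemma
  lifts a dependence among the reduced elements back to the original ones.\<close>

lemma dependence_after_pivot:
  assumes I: "finite I" "k \<in> I"
    and c: "\<exists>j\<in>I - {k}. c j \<noteq> 0" "(\<Sum>j\<in>I - {k}. kscale (c j) (r j - kscale (l j) (r k))) = 0"
  shows "\<exists>c. (\<exists>j\<in>I. c j \<noteq> 0) \<and> (\<Sum>j\<in>I. kscale (c j) (r j)) = 0"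
proof -
  define s where "s = (\<Sum>j\<in>I - {k}. c j * l j)"
  define c' where "c' j = (if j = k then - s else c j)" for j
  have "(\<Sum>j\<in>I - {k}. kscale (c j) (r j)) = kscale s (r k)"
    using c(2) by (simp add: kscale_diff_right kscale_kscale sum_subtractf s_def kscale_sum_left)
  moreover have "(\<Sum>j\<in>I - {k}. kscale (c' j) (r j)) = (\<Sum>j\<in>I - {k}. kscale (c j) (r j))"
    by (rule sum.cong) (auto simp: c'_def)
  ultimately have "(\<Sum>j\<in>I. kscale (c' j) (r j)) = 0"
    using I by (simp add: sum.remove c'_def kscale_minus_left)
  moreover have "\<exists>j\<in>I. c' j \<noteq> 0" using c(1) by (auto simp: c'_def)
  ultimately show ?thesis by blast
qed

lemma degree_bounded_dependence:
  fixes V :: "'a::field poly poly set"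
  assumes diff: "\<And>u v. u \<in> V \<Longrightarrow> v \<in> V \<Longrightarrow> u - v \<in> V"
    and scale: "\<And>u c. u \<in> V \<Longrightarrow> kscale c u \<in> V"
    and one_dim: "\<And>u v. u \<in> V \<Longrightarrow> v \<in> V \<Longrightarrow> u \<noteq> 0 \<Longrightarrow> v \<noteq> 0 \<Longrightarrow> degree u = degree v \<Longrightarrow>
                   \<exists>c. u - kscale c v = 0 \<or> degree (u - kscale c v) < degree u"
  shows "finite I \<Longrightarrow> card I > N \<Longrightarrow> \<forall>j\<in>I. r j \<in> V \<and> (r j = 0 \<or> degree (r j) < N) \<Longrightarrow>
         \<exists>c. (\<exists>j\<in>I. c j \<noteq> 0) \<and> (\<Sum>j\<in>I. kscale (c j) (r j)) = 0"
proof (induction N arbitrary: I r)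
  case 0
  then obtain j where "j \<in> I" by fastforce
  moreover have "(\<Sum>j\<in>I. kscale 1 (r j)) = 0" using 0 by simp
  ultimately show ?case by (intro exI[of _ "\<lambda>_. 1"]) auto
next
  case (Suc N)
  show ?case
  proof (cases "\<exists>k\<in>I. r k \<noteq> 0 \<and> degree (r k) = N")
    case False
    then show ?thesis using Suc.IH[of I r] Suc.prems by (metis Suc_lessD less_SucE)
  next
    case True
    then obtain k where k: "k \<in> I" "r k \<noteq> 0" "degree (r k) = N" by blast
    have rk: "r k \<in> V" using k Suc.prems(3) by blast
    have "\<exists>l. r j - kscale l (r k) \<in> V \<and> (r j - kscale l (r k) = 0 \<or> degree (r j - kscale l (r k)) < N)"
      if j: "j \<in> I" for j
    proof -
      have rj: "r j \<in> V" "r j = 0 \<or> degree (r j) < Suc N" using j Suc.prems(3) by blast+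
      show ?thesis
      proof (cases "r j \<noteq> 0 \<and> degree (r j) = N")
        case True
        then show ?thesis using one_dim[OF rj(1) rk _ k(2)] k(3) diff[OF rj(1) scale[OF rk]] by auto
      next
        case False
        then show ?thesis using rj by (intro exI[of _ 0]) auto
      qed
    qed
    then obtain l where l: "\<forall>j\<in>I. r j - kscale (l j) (r k) \<in> V \<and>
        (r j - kscale (l j) (r k) = 0 \<or> degree (r j - kscale (l j) (r k)) < N)"
      by metis
    have "card (I - {k}) > N" using Suc.prems(1,2) k(1) by simp
    then obtain c where "\<exists>j\<in>I - {k}. c j \<noteq> 0"
        "(\<Sum>j\<in>I - {k}. kscale (c j) (r j - kscale (l j) (r k))) = 0"
      using Suc.IH[of "I - {k}" "\<lambda>j. r j - kscale (l j) (r k)"] Suc.prems(1) l by blast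
    then show ?thesis using dependence_after_pivot[OF Suc.prems(1) k(1)] by blast
  qed
qed

locale ore_extension =
  fixes \<sigma> \<delta> :: "'a::field poly \<Rightarrow> 'a poly"
  assumes endo: "K_alg_endo \<sigma>"
    and degree_sigma_y: "degree (\<sigma> [:0, 1:]) > 1"
    and derivation: "K_linear_sigma_derivation \<sigma> \<delta>"
begin

lemma sigma_add: "\<sigma> (a + b) = \<sigma> a + \<sigma> b"
  and sigma_mult: "\<sigma> (a * b) = \<sigma> a * \<sigma> b"
  and sigma_smult: "\<sigma> (smult c a) = smult c (\<sigma> a)"
  and sigma_one: "\<sigma> 1 = 1"
  using endo unfolding K_alg_endo_def by blast+

lemma delta_add: "\<delta> (a + b) = \<delta> a + \<delta> b"
  and delta_smult: "\<delta> (smult c a) = smult c (\<delta> a)"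
  and delta_mult: "\<delta> (a * b) = \<sigma> a * \<delta> b + \<delta> a * b"
  using derivation unfolding K_linear_sigma_derivation_def by blast+

lemma sigma_zero [simp]: "\<sigma> 0 = 0"
  using sigma_add[of 0 0] by (metis add_cancel_right_right add_0)

lemma delta_zero [simp]: "\<delta> 0 = 0"
  using delta_add[of 0 0] by (metis add_cancel_right_right add_0)

lemma sigma_diff: "\<sigma> (a - b) = \<sigma> a - \<sigma> b"
  using sigma_add[of "a - b" b] by (simp add: algebra_simps)

lemma sigma_const [simp]: "\<sigma> [:c:] = [:c:]"
  using sigma_smult[of c 1] sigma_one by simp

lemma delta_one [simp]: "\<delta> 1 = 0"
proof -
  have "\<delta> 1 = \<delta> 1 + \<delta> 1" using delta_mult[of 1 1] sigma_one by simp
  then show ?thesis by (metis add_cancel_right_right)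
qed

lemma delta_const [simp]: "\<delta> [:c:] = 0"
  using delta_smult[of c 1] by simp

text \<open>A \<open>K\<close>-algebra endomorphism of \<open>K[y]\<close> is substitution of \<open>\<sigma>(y)\<close> for \<open>y\<close>; since
  \<open>deg \<sigma>(y) > 1\<close>, every power \<open>\<sigma>\<^sup>m\<close> is injective and multiplies \<open>y\<close>-degrees by \<open>deg \<sigma>(y)\<^sup>m\<close>.\<close>

lemma sigma_pcompose: "\<sigma> f = pcompose f (\<sigma> [:0, 1:])"
proof (induction f)
  case (pCons a p)
  have "\<sigma> (pCons a p) = \<sigma> ([:a:] + [:0, 1:] * p)" by simp
  also have "\<dots> = [:a:] + \<sigma> [:0, 1:] * \<sigma> p" by (simp only: sigma_add sigma_mult sigma_const)
  finally show ?case using pCons by (simp add: pcompose_pCons)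
qed simp

lemma sigma_pow_eq_0_iff [simp]: "(\<sigma> ^^ m) f = 0 \<longleftrightarrow> f = 0"
proof (induction m arbitrary: f)
  case (Suc m)
  have "\<sigma> g = 0 \<longleftrightarrow> g = 0" for g
    using degree_sigma_y by (simp add: sigma_pcompose[of g] pcompose_eq_0_iff)
  then show ?case using Suc by simp
qed simp

lemma degree_sigma_pow: "degree ((\<sigma> ^^ m) f) = degree f * degree (\<sigma> [:0, 1:]) ^ m"
  by (induction m) (simp_all add: sigma_pcompose[of "(\<sigma> ^^ _) f"] degree_pcompose)

lemma sigma_pow_diff: "(\<sigma> ^^ m) (a - b) = (\<sigma> ^^ m) a - (\<sigma> ^^ m) b"
  by (induction m) (simp_all add: sigma_diff)

lemma sigma_pow_smult: "(\<sigma> ^^ m) (smult c a) = smult c ((\<sigma> ^^ m) a)"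
  by (induction m) (simp_all add: sigma_smult)

abbreviation xmul :: "'a poly poly \<Rightarrow> 'a poly poly" where
  "xmul \<equiv> ore_xmul \<sigma> \<delta>"

abbreviation ore_times :: "'a poly poly \<Rightarrow> 'a poly poly \<Rightarrow> 'a poly poly" (infixl "\<star>" 70) where
  "Q1 \<star> Q2 \<equiv> ore_mult \<sigma> \<delta> Q1 Q2"

lemma coeff_xmul:
  "coeff (xmul Q) i = (case i of 0 \<Rightarrow> 0 | Suc j \<Rightarrow> \<sigma> (coeff Q j)) + \<delta> (coeff Q i)"
  unfolding ore_xmul_def by (simp add: coeff_map_poly coeff_pCons split: nat.split)

lemma xmul_add: "xmul (Q1 + Q2) = xmul Q1 + xmul Q2"
  by (rule poly_eqI) (simp add: coeff_xmul sigma_add delta_add algebra_simps split: nat.split)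

lemma xmul_0 [simp]: "xmul 0 = 0"
  by (rule poly_eqI) (simp add: coeff_xmul split: nat.split)

lemma xmul_smult: "xmul (smult r Q) = smult (\<sigma> r) (xmul Q) + smult (\<delta> r) Q"
  by (rule poly_eqI) (simp add: coeff_xmul sigma_mult delta_mult algebra_simps split: nat.split)

lemma xmul_pCons: "xmul (pCons a Q) = pCons (\<delta> a) ([:\<sigma> a:] + xmul Q)"
  by (rule poly_eqI) (simp add: coeff_xmul coeff_pCons split: nat.split)

lemma xmul_1: "xmul 1 = pCons 0 1"
  by (rule poly_eqI) (simp add: coeff_xmul sigma_one coeff_pCons split: nat.split)

lemma ore_mult_conv_sum:
  assumes "degree P \<le> N"
  shows "P \<star> Q = (\<Sum>i\<le>N. smult (coeff P i) ((xmul ^^ i) Q))"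
proof -
  have "P \<star> Q = (\<Sum>i\<le>degree P. smult (coeff P i) ((xmul ^^ i) Q))"
    unfolding ore_mult_def by (simp add: smult_conv_map_poly)
  also have "\<dots> = (\<Sum>i\<le>N. smult (coeff P i) ((xmul ^^ i) Q))"
    by (rule sum.mono_neutral_left) (use assms in \<open>auto simp: coeff_eq_0\<close>)
  finally show ?thesis .
qed

lemma ore_mult_0_left [simp]: "0 \<star> Q = 0"
  by (simp add: ore_mult_conv_sum[of 0 0])

lemma ore_mult_pCons: "pCons a P \<star> Q = smult a Q + P \<star> xmul Q"
proof -
  have "pCons a P \<star> Q = (\<Sum>i\<le>Suc (degree P). smult (coeff (pCons a P) i) ((xmul ^^ i) Q))"
    by (rule ore_mult_conv_sum) (simp add: degree_pCons_le)
  also have "\<dots> = smult a Q + (\<Sum>i\<le>degree P. smult (coeff P i) ((xmul ^^ i) (xmul Q)))"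
    by (subst sum.atMost_Suc_shift) (simp add: funpow_Suc_right del: funpow.simps)
  also have "\<dots> = smult a Q + P \<star> xmul Q"
    by (simp add: ore_mult_conv_sum[of P "degree P"])
  finally show ?thesis .
qed

lemma ore_mult_add_left: "(P1 + P2) \<star> Q = P1 \<star> Q + P2 \<star> Q"
  by (induction P1 P2 arbitrary: Q rule: poly_induct2)
    (simp_all add: ore_mult_pCons smult_add_left algebra_simps)

lemma ore_mult_add_right: "P \<star> (Q1 + Q2) = P \<star> Q1 + P \<star> Q2"
  by (induction P arbitrary: Q1 Q2) (simp_all add: ore_mult_pCons smult_add_right xmul_add)

lemma ore_mult_0_right [simp]: "P \<star> 0 = 0"
  by (induction P) (simp_all add: ore_mult_pCons)

lemma ore_mult_sum_right: "P \<star> (\<Sum>i\<in>I. f i) = (\<Sum>i\<in>I. P \<star> f i)"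
  by (induction I rule: infinite_finite_induct) (simp_all add: ore_mult_add_right)

lemma ore_mult_diff_left: "(P1 - P2) \<star> Q = P1 \<star> Q - P2 \<star> Q"
  using ore_mult_add_left[of "P1 - P2" P2 Q] by (simp add: algebra_simps)

lemma ore_mult_diff_right: "P \<star> (Q1 - Q2) = P \<star> Q1 - P \<star> Q2"
  using ore_mult_add_right[of P "Q1 - Q2" Q2] by (simp add: algebra_simps)

lemma ore_mult_smult_left: "smult r P \<star> Q = smult r (P \<star> Q)"
  by (induction P arbitrary: Q) (simp_all add: ore_mult_pCons smult_add_right)

lemma xmul_ore_mult: "xmul (Q \<star> W) = xmul Q \<star> W"
proof (induction Q arbitrary: W)
  case (pCons a p)
  have "xmul (pCons a p \<star> W) = smult (\<sigma> a) (xmul W) + smult (\<delta> a) W + xmul p \<star> xmul W"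
    by (simp add: ore_mult_pCons xmul_add xmul_smult pCons)
  also have "\<dots> = xmul (pCons a p) \<star> W"
    by (simp add: xmul_pCons ore_mult_pCons ore_mult_add_left algebra_simps)
  finally show ?case .
qed simp

lemma ore_mult_assoc: "(P \<star> Q) \<star> W = P \<star> (Q \<star> W)"
  by (induction P arbitrary: Q)
    (simp_all add: ore_mult_pCons ore_mult_add_left ore_mult_smult_left xmul_ore_mult)

lemma ore_mult_pCons_0_right: "Q \<star> pCons 0 W = pCons 0 (Q \<star> W)"
  by (induction Q arbitrary: W) (simp_all add: ore_mult_pCons xmul_pCons)

lemma ore_mult_1_right [simp]: "Q \<star> 1 = Q"
  by (induction Q) (simp_all add: ore_mult_pCons xmul_1 ore_mult_pCons_0_right)

lemma ore_mult_const_left: "[:r:] \<star> Q = smult r Q"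
  by (simp add: ore_mult_pCons)

lemma ore_mult_1_left [simp]: "1 \<star> Q = Q"
  using ore_mult_const_left[of 1 Q] by (simp add: one_pCons[symmetric])

lemma kscale_conv_ore_mult: "kscale c u = [:[:c:]:] \<star> u"
  by (simp add: kscale_def ore_mult_const_left)

lemma xmul_kscale: "xmul (kscale c W) = kscale c (xmul W)"
  by (simp add: kscale_def xmul_smult)

lemma ore_mult_kscale_left: "kscale c P \<star> Q = kscale c (P \<star> Q)"
  by (simp add: kscale_def ore_mult_smult_left)

lemma ore_mult_kscale_right: "P \<star> kscale c Q = kscale c (P \<star> Q)"
proof (induction P arbitrary: Q)
  case (pCons a p)
  then show ?case
    by (simp add: ore_mult_pCons xmul_kscale) (simp add: kscale_def smult_add_right mult.commute)
qed (simp add: kscale_def)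

lemma const_ore_mult_commute: "[:[:c:]:] \<star> Q = Q \<star> [:[:c:]:]"
  using ore_mult_kscale_right[of Q c 1] by (simp add: kscale_def ore_mult_const_left)

text \<open>Since \<open>\<sigma>\<close> is injective, \<open>S\<close> is a domain in which \<open>x\<close>-degrees add and leading
  coefficients multiply as \<open>lc(PQ) = lc(P) \<sigma>\<^sup>deg P(lc Q)\<close>.\<close>

lemma degree_xmul:
  assumes "Q \<noteq> 0"
  shows "degree (xmul Q) = Suc (degree Q)" and "lead_coeff (xmul Q) = \<sigma> (lead_coeff Q)"
proof -
  have top: "coeff (xmul Q) (Suc (degree Q)) = \<sigma> (lead_coeff Q)"
    by (simp add: coeff_xmul coeff_eq_0)
  have "\<sigma> (lead_coeff Q) \<noteq> 0" using sigma_pow_eq_0_iff[of 1] assms by simp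
  then have "Suc (degree Q) \<le> degree (xmul Q)" using top by (metis le_degree)
  moreover have "degree (xmul Q) \<le> Suc (degree Q)"
    by (rule degree_le) (auto simp: coeff_xmul coeff_eq_0 split: nat.split)
  ultimately show deg: "degree (xmul Q) = Suc (degree Q)" by simp
  show "lead_coeff (xmul Q) = \<sigma> (lead_coeff Q)" using top by (simp add: deg)
qed

lemma ore_mult_lead:
  assumes "P \<noteq> 0" "Q \<noteq> 0"
  shows "P \<star> Q \<noteq> 0 \<and> degree (P \<star> Q) = degree P + degree Q \<and>
         lead_coeff (P \<star> Q) = lead_coeff P * (\<sigma> ^^ degree P) (lead_coeff Q)"
  using assms
proof (induction P arbitrary: Q)
  case (pCons a p)
  show ?case
  proof (cases "p = 0")
    case True
    then show ?thesis using pCons.prems by (simp add: ore_mult_pCons)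
  next
    case False
    have xQ: "xmul Q \<noteq> 0" "degree (xmul Q) = Suc (degree Q)" "lead_coeff (xmul Q) = \<sigma> (lead_coeff Q)"
      using degree_xmul[OF pCons.prems(2)] by (auto simp: degree_xmul)
    have IH: "degree (p \<star> xmul Q) = degree p + degree (xmul Q)"
      "lead_coeff (p \<star> xmul Q) = lead_coeff p * (\<sigma> ^^ degree p) (lead_coeff (xmul Q))"
      using pCons.IH[OF False xQ(1)] by blast+
    have deg_IH: "degree (p \<star> xmul Q) = degree p + Suc (degree Q)"
      using IH(1) by (simp only: xQ(2))
    have lc_IH: "lead_coeff (p \<star> xmul Q) = lead_coeff p * (\<sigma> ^^ Suc (degree p)) (lead_coeff Q)"
      using IH(2) by (simp only: xQ(3) funpow_Suc_right comp_apply)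
    have smaller: "degree (smult a Q) < degree (p \<star> xmul Q)"
      using deg_IH degree_smult_le[of a Q] by linarith
    have deg: "degree (pCons a p \<star> Q) = degree (pCons a p) + degree Q"
      using degree_add_eq_left[OF smaller] deg_IH False by (simp add: ore_mult_pCons add.commute)
    moreover have "lead_coeff (pCons a p \<star> Q) = lead_coeff p * (\<sigma> ^^ Suc (degree p)) (lead_coeff Q)"
      using lead_coeff_add_le[OF smaller] lc_IH by (simp add: ore_mult_pCons)
    moreover have "pCons a p \<star> Q \<noteq> 0"
      using deg False by (intro notI) simp
    ultimately show ?thesis using False by simp
  qed
qed simp

lemma ore_mult_eq_0_iff: "P \<star> Q = 0 \<longleftrightarrow> P = 0 \<or> Q = 0"
  using ore_mult_lead[of P Q] by auto

lemma degree_ore_mult: "P \<noteq> 0 \<Longrightarrow> Q \<noteq> 0 \<Longrightarrow> degree (P \<star> Q) = degree P + degree Q"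
  using ore_mult_lead by blast

lemma ore_mult_cancel_right: "A \<star> H = B \<star> H \<Longrightarrow> H \<noteq> 0 \<Longrightarrow> A = B"
  using ore_mult_eq_0_iff[of "A - B" H] by (simp add: ore_mult_diff_left)

abbreviation cent :: "'a poly poly \<Rightarrow> 'a poly poly set" where
  "cent P \<equiv> ore_centralizer \<sigma> \<delta> P"

lemma mem_cent_iff: "Q \<in> cent P \<longleftrightarrow> P \<star> Q = Q \<star> P"
  by (simp add: ore_centralizer_def)

lemma one_mem_cent: "1 \<in> cent P"
  and self_mem_cent: "P \<in> cent P"
  by (simp_all add: mem_cent_iff)

lemma cent_diff: "A \<in> cent P \<Longrightarrow> B \<in> cent P \<Longrightarrow> A - B \<in> cent P"
  by (simp add: mem_cent_iff ore_mult_diff_left ore_mult_diff_right)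

lemma cent_kscale: "A \<in> cent P \<Longrightarrow> kscale c A \<in> cent P"
  by (simp add: mem_cent_iff ore_mult_kscale_left ore_mult_kscale_right)

lemma cent_mult: "A \<in> cent P \<Longrightarrow> B \<in> cent P \<Longrightarrow> A \<star> B \<in> cent P"
  by (simp add: mem_cent_iff) (metis ore_mult_assoc)

lemma lead_coeff_commute:
  assumes "P \<noteq> 0" "Q \<noteq> 0" "Q \<in> cent P"
  shows "lead_coeff P * (\<sigma> ^^ degree P) (lead_coeff Q) =
         lead_coeff Q * (\<sigma> ^^ degree Q) (lead_coeff P)"
proof -
  have "lead_coeff (P \<star> Q) = lead_coeff P * (\<sigma> ^^ degree P) (lead_coeff Q)"
    using ore_mult_lead[OF assms(1,2)] by blast
  moreover have "lead_coeff (Q \<star> P) = lead_coeff Q * (\<sigma> ^^ degree Q) (lead_coeff P)"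
    using ore_mult_lead[OF assms(2,1)] by blast
  ultimately show ?thesis using assms(3) by (simp add: mem_cent_iff)
qed

text \<open>For \<open>n \<ge> 1\<close> the twisted equation fixes the \<open>y\<close>-degree of \<open>q\<close>, because
  \<open>deg p + deg q \<cdot> d\<^sup>n = deg q + deg p \<cdot> d\<^sup>m\<close> with \<open>d = deg \<sigma>(y) > 1\<close>.\<close>

lemma twisted_solution_degree_unique:
  assumes n: "n \<ge> 1" and p: "p \<noteq> 0"
    and q1: "q1 \<noteq> 0" "p * (\<sigma> ^^ n) q1 = q1 * (\<sigma> ^^ m) p"
    and q2: "q2 \<noteq> 0" "p * (\<sigma> ^^ n) q2 = q2 * (\<sigma> ^^ m) p"
  shows "degree q1 = degree q2"
proof -
  define e where "e = degree (\<sigma> [:0, 1:]) ^ n"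
  have degree_eq: "degree p + degree q * e = degree q + degree p * degree (\<sigma> [:0, 1:]) ^ m"
    if "q \<noteq> 0" "p * (\<sigma> ^^ n) q = q * (\<sigma> ^^ m) p" for q
    using arg_cong[OF that(2), of degree] p that(1) by (simp add: degree_mult_eq degree_sigma_pow e_def)
  have "degree q1 * e + degree q2 = degree q2 * e + degree q1"
    using degree_eq[OF q1] degree_eq[OF q2] by linarith
  then have "int (degree q1) * int e + int (degree q2) = int (degree q2) * int e + int (degree q1)"
    by (metis of_nat_add of_nat_mult)
  then have "(int (degree q1) - int (degree q2)) * (int e - 1) = 0"
    by (simp add: algebra_simps)
  moreover have "e > 1" using n degree_sigma_y unfolding e_def by (intro one_less_power) auto
  ultimately show ?thesis by simp
qed

lemma twisted_solutions_one_dim: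
  assumes n: "n \<ge> 1" and p: "p \<noteq> 0"
    and q1: "q1 \<noteq> 0" "p * (\<sigma> ^^ n) q1 = q1 * (\<sigma> ^^ m) p"
    and q2: "q2 \<noteq> 0" "p * (\<sigma> ^^ n) q2 = q2 * (\<sigma> ^^ m) p"
  shows "\<exists>c. q1 = smult c q2"
proof -
  define c where "c = lead_coeff q1 / lead_coeff q2"
  define r where "r = q1 - smult c q2"
  have r_sol: "p * (\<sigma> ^^ n) r = r * (\<sigma> ^^ m) p"
    unfolding r_def using q1(2) q2(2) by (simp add: sigma_pow_diff sigma_pow_smult algebra_simps)
  have same_degree: "degree q2 = degree q1"
    using twisted_solution_degree_unique[OF n p q2 q1] .
  have "coeff r (degree q1) = lead_coeff q1 - c * lead_coeff q2"
    unfolding r_def by (simp add: same_degree)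
  then have top: "coeff r (degree q1) = 0"
    using q2(1) by (simp add: c_def)
  have "r = 0"
  proof (rule ccontr)
    assume "r \<noteq> 0"
    then have "degree r = degree q1" using twisted_solution_degree_unique[OF n p _ r_sol q1] by blast
    then show False using top \<open>r \<noteq> 0\<close> by (metis leading_coeff_0_iff)
  qed
  then show ?thesis unfolding r_def by auto
qed

lemma cent_leading_term_one_dim:
  assumes n: "degree P \<ge> 1"
    and Q1: "Q1 \<in> cent P" "Q1 \<noteq> 0" and Q2: "Q2 \<in> cent P" "Q2 \<noteq> 0"
    and same_degree: "degree Q1 = degree Q2"
  shows "\<exists>c. Q1 - kscale c Q2 = 0 \<or> degree (Q1 - kscale c Q2) < degree Q1"
proof -
  have P: "P \<noteq> 0" using n by auto
  have Q2_sol: "lead_coeff P * (\<sigma> ^^ degree P) (lead_coeff Q2) =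
      lead_coeff Q2 * (\<sigma> ^^ degree Q1) (lead_coeff P)"
    using lead_coeff_commute[OF P Q2(2,1)] same_degree by simp
  obtain c where lc: "lead_coeff Q1 = smult c (lead_coeff Q2)"
    using twisted_solutions_one_dim[OF n _ _ lead_coeff_commute[OF P Q1(2,1)] _ Q2_sol]
      P Q1(2) Q2(2) by auto
  define R where "R = Q1 - kscale c Q2"
  have top: "coeff R (degree Q1) = 0" unfolding R_def kscale_def using lc same_degree by simp
  have "degree R \<le> degree Q1" unfolding R_def kscale_def using same_degree
    by (metis degree_diff_le degree_smult_le le_trans order_refl)
  then have "R = 0 \<or> degree R < degree Q1"
    using top by (metis leading_coeff_0_iff le_neq_implies_less)
  then show ?thesis unfolding R_def by blast
qed

text \<open>If \<open>P \<in> R \<setminus> K\<close>, the twisted equation with \<open>n = 0\<close> forces \<open>\<sigma>\<^sup>m(p) = p\<close>, hence \<open>m = 0\<close>: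
  the centralizer lies in \<open>R\<close>, which is commutative.\<close>

lemma cent_commutative_degree_0:
  assumes P: "degree P = 0" "P \<notin> range (\<lambda>c. [:[:c:]:])"
    and Q1: "Q1 \<in> cent P" and Q2: "Q2 \<in> cent P"
  shows "Q1 \<star> Q2 = Q2 \<star> Q1"
proof -
  obtain p where p: "P = [:p:]" using P(1) by (metis degree_eq_zeroE)
  have deg_p: "degree p \<ge> 1"
  proof (rule ccontr)
    assume "\<not> degree p \<ge> 1"
    then obtain c where "p = [:c:]" by (metis degree_eq_zeroE less_one not_le)
    then show False using P(2) p by auto
  qed
  have in_R: "degree Q = 0" if "Q \<in> cent P" "Q \<noteq> 0" for Q
  proof -
    have "p \<noteq> 0" using deg_p by auto
    then have "p * lead_coeff Q = lead_coeff Q * (\<sigma> ^^ degree Q) p"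
      using lead_coeff_commute[of P Q] that p by simp
    then have "(\<sigma> ^^ degree Q) p = p" using that(2) by (simp add: mult.commute)
    then have "degree p * degree (\<sigma> [:0, 1:]) ^ degree Q = degree p"
      by (metis degree_sigma_pow)
    then have "degree (\<sigma> [:0, 1:]) ^ degree Q = 1" using deg_p by simp
    then show ?thesis using degree_sigma_y by (metis one_less_power less_irrefl neq0_conv)
  qed
  show ?thesis
  proof (cases "Q1 = 0 \<or> Q2 = 0")
    case False
    then obtain q1 q2 where "Q1 = [:q1:]" "Q2 = [:q2:]"
      using in_R Q1 Q2 by (metis degree_eq_zeroE)
    then show ?thesis by (simp add: ore_mult_const_left mult.commute)
  qed auto
qed

definition ore_pow :: "'a poly poly \<Rightarrow> nat \<Rightarrow> 'a poly poly" where
  "ore_pow A k = ((\<lambda>X. A \<star> X) ^^ k) 1"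

lemma ore_pow_0 [simp]: "ore_pow A 0 = 1"
  and ore_pow_Suc: "ore_pow A (Suc k) = A \<star> ore_pow A k"
  by (simp_all add: ore_pow_def)

lemma ore_pow_degree: "A \<noteq> 0 \<Longrightarrow> ore_pow A k \<noteq> 0 \<and> degree (ore_pow A k) = k * degree A"
  by (induction k) (simp_all add: ore_pow_Suc ore_mult_eq_0_iff degree_ore_mult)

inductive_set subalg :: "'a poly poly \<Rightarrow> 'a poly poly \<Rightarrow> 'a poly poly set" for A P where
  subalg_const: "[:[:c:]:] \<in> subalg A P"
| subalg_A: "A \<in> subalg A P"
| subalg_P: "P \<in> subalg A P"
| subalg_add: "u \<in> subalg A P \<Longrightarrow> v \<in> subalg A P \<Longrightarrow> u + v \<in> subalg A P"
| subalg_mult: "u \<in> subalg A P \<Longrightarrow> v \<in> subalg A P \<Longrightarrow> u \<star> v \<in> subalg A P"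

lemma subalg_0: "0 \<in> subalg A P"
  using subalg_const[of 0] by simp

lemma subalg_kscale: "u \<in> subalg A P \<Longrightarrow> kscale c u \<in> subalg A P"
  by (simp add: kscale_conv_ore_mult subalg_mult subalg_const)

lemma subalg_pow: "u \<in> subalg A P \<Longrightarrow> ore_pow u k \<in> subalg A P"
  using subalg_const[of 1] by (induction k) (simp_all add: ore_pow_Suc subalg_mult one_pCons)

lemma subalg_sum: "(\<And>i. i \<in> I \<Longrightarrow> f i \<in> subalg A P) \<Longrightarrow> (\<Sum>i\<in>I. f i) \<in> subalg A P"
  by (induction I rule: infinite_finite_induct) (simp_all add: subalg_0 subalg_add)

lemma subalg_commute_gen:
  assumes "A \<star> v = v \<star> A" "P \<star> v = v \<star> P" "u \<in> subalg A P"
  shows "u \<star> v = v \<star> u"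
  using assms(3)
proof (induction u rule: subalg.induct)
  case (subalg_const c) then show ?case by (rule const_ore_mult_commute)
next
  case (subalg_add u w) then show ?case by (simp add: ore_mult_add_left ore_mult_add_right)
next
  case (subalg_mult u w) then show ?case by (metis ore_mult_assoc)
qed (use assms in auto)

lemma subalg_commute:
  assumes AP: "A \<star> P = P \<star> A" and u: "u \<in> subalg A P" and v: "v \<in> subalg A P"
  shows "u \<star> v = v \<star> u"
proof -
  have "v \<star> A = A \<star> v" by (rule subalg_commute_gen[OF refl AP[symmetric] v])
  moreover have "v \<star> P = P \<star> v" by (rule subalg_commute_gen[OF AP refl v])
  ultimately show ?thesis using subalg_commute_gen[OF _ _ u] by simp
qed

lemma subalg_subset_cent:
  assumes "A \<in> cent P"
  shows "subalg A P \<subseteq> cent P"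
proof
  fix u assume "u \<in> subalg A P"
  moreover have "A \<star> P = P \<star> A" using assms by (simp add: mem_cent_iff)
  ultimately have "u \<star> P = P \<star> u" using subalg_commute_gen[OF _ refl] by blast
  then show "u \<in> cent P" by (simp add: mem_cent_iff)
qed

text \<open>A nonzero \<open>K\<close>-combination of powers of \<open>P\<close> is nonzero, since the powers have
  distinct degrees.\<close>

lemma degree_pow_combination_le: "degree (\<Sum>j\<le>J. kscale (c j) (ore_pow P j)) \<le> J * degree P"
proof (induction J)
  case (Suc J)
  have "degree (kscale (c (Suc J)) (ore_pow P (Suc J))) \<le> Suc J * degree P"
    using degree_kscale_le[of "c (Suc J)" "ore_pow P (Suc J)"] ore_pow_degree[of P "Suc J"]
    by (cases "P = 0") (auto simp: ore_pow_Suc)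
  then show ?case using Suc by (simp add: degree_add_le)
qed (simp add: kscale_def)

lemma pow_combination_nonzero:
  assumes P: "degree P \<ge> 1"
  shows "(\<exists>j\<le>J. c j \<noteq> 0) \<Longrightarrow> (\<Sum>j\<le>J. kscale (c j) (ore_pow P j)) \<noteq> 0"
proof (induction J)
  case 0 then show ?case by (simp add: kscale_def)
next
  case (Suc J)
  have P0: "P \<noteq> 0" using P by auto
  show ?case
  proof (cases "c (Suc J) = 0")
    case True
    then have "\<exists>j\<le>J. c j \<noteq> 0" using Suc.prems by (metis le_Suc_eq)
    then show ?thesis using Suc.IH True by simp
  next
    case False
    let ?top = "kscale (c (Suc J)) (ore_pow P (Suc J))"
    have "degree ?top = Suc J * degree P"
      using degree_kscale[OF False] ore_pow_degree[of P "Suc J"] P0 by simp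
    moreover have "degree (\<Sum>j\<le>J. kscale (c j) (ore_pow P j)) < Suc J * degree P"
      using degree_pow_combination_le[where J = J and c = c and P = P] P by simp
    ultimately have "degree (\<Sum>j\<le>Suc J. kscale (c j) (ore_pow P j)) = Suc J * degree P"
      by (simp add: degree_add_eq_right)
    then have "degree (\<Sum>j\<le>Suc J. kscale (c j) (ore_pow P j)) \<ge> 1" using P by simp
    then show ?thesis by auto
  qed
qed

context
  fixes P :: "'a poly poly"
  assumes positive_degree: "degree P \<ge> 1"
begin

lemma P_nonzero: "P \<noteq> 0"
  using positive_degree by auto

text \<open>The \<open>x\<close>-degrees of nonzero elements of \<open>C(P)\<close> form an additive monoid containing
  \<open>deg P\<close>; choose \<open>A \<in> C(P)\<close> whose degree generates it modulo \<open>deg P\<close>.\<close>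

lemma cent_degree_generator:
  obtains A where "A \<in> cent P" "A \<noteq> 0"
    "\<And>Q. Q \<in> cent P \<Longrightarrow> Q \<noteq> 0 \<Longrightarrow> gcd (degree A) (degree P) dvd degree Q"
proof -
  define D where "D = degree ` (cent P - {0})"
  have "0 \<in> D" unfolding D_def using one_mem_cent[of P] by force
  moreover have "degree P \<in> D" unfolding D_def using self_mem_cent P_nonzero by blast
  moreover have "x + y \<in> D" if x: "x \<in> D" and y: "y \<in> D" for x y
  proof -
    obtain Q1 Q2 where "Q1 \<in> cent P" "Q1 \<noteq> 0" "Q2 \<in> cent P" "Q2 \<noteq> 0"
      and "x = degree Q1" "y = degree Q2"
      using x y unfolding D_def by blast
    then show ?thesis unfolding D_def
      by (intro image_eqI[of _ _ "Q1 \<star> Q2"]) (simp_all add: degree_ore_mult ore_mult_eq_0_iff cent_mult)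
  qed
  ultimately obtain a where "a \<in> D" "\<forall>b\<in>D. gcd a (degree P) dvd b"
    using additive_monoid_gcd_generator[of "degree P" "degree P" D] positive_degree by auto
  then show ?thesis using that unfolding D_def by blast
qed

context
  fixes A :: "'a poly poly"
  assumes A_cent: "A \<in> cent P" and A_nonzero: "A \<noteq> 0"
    and A_generates: "\<And>Q. Q \<in> cent P \<Longrightarrow> Q \<noteq> 0 \<Longrightarrow> gcd (degree A) (degree P) dvd degree Q"
begin

text \<open>Every \<open>X \<in> C(P)\<close> is congruent modulo \<open>K\<langle>A, P\<rangle>\<close> to an element of degree below
  \<open>deg P \<cdot> deg A\<close>: as long as \<open>deg X = i deg A + j deg P\<close> is large, subtract the multiple of
  \<open>A\<^sup>i P\<^sup>j\<close> that kills the leading term.\<close>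

lemma reduction_mod_subalg:
  "X \<in> cent P \<Longrightarrow> \<exists>e\<in>subalg A P. X - e = 0 \<or> degree (X - e) < degree P * degree A"
proof (induction "degree X" arbitrary: X rule: less_induct)
  case less
  show ?case
  proof (cases "X = 0 \<or> degree X < degree P * degree A")
    case True
    then show ?thesis using subalg_0 by (intro bexI[of _ 0]) auto
  next
    case False
    then have X: "X \<noteq> 0" "degree P * degree A \<le> degree X" by auto
    obtain i j where ij: "degree X = i * degree A + j * degree P"
      using split_by_generator[OF _ A_generates[OF less.prems X(1)] X(2)] positive_degree by auto
    define E where "E = ore_pow A i \<star> ore_pow P j"
    have E_subalg: "E \<in> subalg A P" unfolding E_def by (intro subalg_mult subalg_pow subalg_A subalg_P)
    have E_cent: "E \<in> cent P" using subalg_subset_cent[OF A_cent] E_subalg by blast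
    have "E \<noteq> 0" "degree E = degree X"
      using ore_pow_degree[OF A_nonzero, of i] ore_pow_degree[OF P_nonzero, of j] ij
      by (simp_all add: E_def ore_mult_eq_0_iff degree_ore_mult)
    then obtain c where c: "X - kscale c E = 0 \<or> degree (X - kscale c E) < degree X"
      using cent_leading_term_one_dim[OF positive_degree less.prems X(1) E_cent] by auto
    have step_subalg: "kscale c E \<in> subalg A P" by (rule subalg_kscale[OF E_subalg])
    show ?thesis
    proof (cases "X - kscale c E = 0")
      case True
      then show ?thesis using step_subalg by auto
    next
      case False
      have "X - kscale c E \<in> cent P" by (rule cent_diff[OF less.prems cent_kscale[OF E_cent]])
      then obtain e where e: "e \<in> subalg A P"
        "X - kscale c E - e = 0 \<or> degree (X - kscale c E - e) < degree P * degree A"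
        using less.hyps False c by blast
      moreover have "X - (kscale c E + e) = X - kscale c E - e" by (simp add: algebra_simps)
      ultimately show ?thesis using subalg_add[OF step_subalg e(1)] by (metis (no_types))
    qed
  qed
qed

text \<open>For \<open>Z \<in> C(P)\<close>, the \<open>N + 1\<close> remainders of \<open>Z, ZP, \<dots>, ZP\<^sup>N\<close> (\<open>N = deg P \<cdot> deg A\<close>) are
  linearly dependent, which yields a nonzero \<open>f \<in> K[P]\<close> with \<open>Z f \<in> K\<langle>A, P\<rangle>\<close>.\<close>

lemma annihilating_multiple:
  assumes Z: "Z \<in> cent P"
  shows "\<exists>f\<in>subalg A P. f \<noteq> 0 \<and> Z \<star> f \<in> subalg A P"
proof -
  define N where "N = degree P * degree A"
  have ZP_cent: "Z \<star> ore_pow P j \<in> cent P" for j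
  proof -
    have "ore_pow P j \<in> subalg A P" by (intro subalg_pow subalg_P)
    then show ?thesis using cent_mult[OF Z] subalg_subset_cent[OF A_cent] by blast
  qed
  have "\<forall>j. \<exists>e. e \<in> subalg A P \<and> (Z \<star> ore_pow P j - e = 0 \<or> degree (Z \<star> ore_pow P j - e) < N)"
    using reduction_mod_subalg[OF ZP_cent] unfolding N_def by blast
  then have "\<exists>e. \<forall>j. e j \<in> subalg A P \<and>
      (Z \<star> ore_pow P j - e j = 0 \<or> degree (Z \<star> ore_pow P j - e j) < N)"
    by (rule choice)
  then obtain e where e: "\<And>j. e j \<in> subalg A P"
    "\<And>j. Z \<star> ore_pow P j - e j = 0 \<or> degree (Z \<star> ore_pow P j - e j) < N"
    by blast
  define r where "r j = Z \<star> ore_pow P j - e j" for j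
  have "r j \<in> cent P" for j
    unfolding r_def using cent_diff[OF ZP_cent] e(1) subalg_subset_cent[OF A_cent] by (meson subsetD)
  then have r: "\<forall>j\<in>{..N}. r j \<in> cent P \<and> (r j = 0 \<or> degree (r j) < N)"
    using e(2) unfolding r_def by blast
  have "card {..N} > N" by simp
  then obtain c where c: "\<exists>j\<in>{..N}. c j \<noteq> 0" "(\<Sum>j\<le>N. kscale (c j) (r j)) = 0"
    using degree_bounded_dependence[OF cent_diff cent_kscale
        cent_leading_term_one_dim[OF positive_degree] finite_atMost _ r] by blast
  define f where "f = (\<Sum>j\<le>N. kscale (c j) (ore_pow P j))"
  have "Z \<star> f = (\<Sum>j\<le>N. kscale (c j) (Z \<star> ore_pow P j))"
    unfolding f_def by (simp add: ore_mult_sum_right ore_mult_kscale_right)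
  also have "\<dots> = (\<Sum>j\<le>N. kscale (c j) (e j) + kscale (c j) (r j))"
    unfolding r_def by (simp add: kscale_add_right[symmetric])
  also have "\<dots> = (\<Sum>j\<le>N. kscale (c j) (e j))"
    using c(2) by (simp add: sum.distrib)
  finally have "Z \<star> f \<in> subalg A P" using e(1) by (simp add: subalg_sum subalg_kscale)
  moreover have "f \<in> subalg A P" unfolding f_def by (intro subalg_sum subalg_kscale subalg_pow subalg_P)
  moreover have "f \<noteq> 0" unfolding f_def using pow_combination_nonzero[OF positive_degree] c(1) by auto
  ultimately show ?thesis by blast
qed

end

text \<open>Main case: for \<open>X, Y \<in> C(P)\<close> pick nonzero \<open>f, g \<in> K\<langle>A, P\<rangle>\<close> with \<open>X f, Y g \<in> K\<langle>A, P\<rangle>\<close>.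
  Inside the commutative algebra \<open>K\<langle>A, P\<rangle>\<close> one gets \<open>(XY)(gf) = (Xf)(Yg) = (Yg)(Xf) = (YX)(fg)\<close>,
  and \<open>fg = gf \<noteq> 0\<close> may be cancelled because \<open>S\<close> is a domain.\<close>

lemma cent_commutative_positive_degree:
  assumes X: "X \<in> cent P" and Y: "Y \<in> cent P"
  shows "X \<star> Y = Y \<star> X"
proof -
  obtain A where A: "A \<in> cent P" "A \<noteq> 0"
    "\<And>Q. Q \<in> cent P \<Longrightarrow> Q \<noteq> 0 \<Longrightarrow> gcd (degree A) (degree P) dvd degree Q"
    using cent_degree_generator by blast
  have AP: "A \<star> P = P \<star> A" using A(1) by (simp add: mem_cent_iff)
  obtain f where f: "f \<in> subalg A P" "f \<noteq> 0" "X \<star> f \<in> subalg A P"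
    using annihilating_multiple[OF A X] by blast
  obtain g where g: "g \<in> subalg A P" "g \<noteq> 0" "Y \<star> g \<in> subalg A P"
    using annihilating_multiple[OF A Y] by blast
  have "(X \<star> Y) \<star> (g \<star> f) = (X \<star> f) \<star> (Y \<star> g)"
    using subalg_commute[OF AP g(3) f(1)] by (simp add: ore_mult_assoc)
  also have "\<dots> = (Y \<star> g) \<star> (X \<star> f)"
    by (rule subalg_commute[OF AP f(3) g(3)])
  also have "\<dots> = (Y \<star> X) \<star> (f \<star> g)"
    using subalg_commute[OF AP f(3) g(1)] by (simp add: ore_mult_assoc)
  finally have "(X \<star> Y) \<star> (f \<star> g) = (Y \<star> X) \<star> (f \<star> g)"
    using subalg_commute[OF AP g(1) f(1)] by simp
  moreover have "f \<star> g \<noteq> 0" using f(2) g(2) by (simp add: ore_mult_eq_0_iff)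
  ultimately show ?thesis by (rule ore_mult_cancel_right)
qed

end

end

theorem theorem4p1:
  fixes \<sigma> \<delta> :: "'a::field poly \<Rightarrow> 'a poly" and P :: "'a poly poly"
  assumes "K_alg_endo \<sigma>"
    and "degree (\<sigma> [:0, 1:]) > 1"
    and "K_linear_sigma_derivation \<sigma> \<delta>"
    and "P \<notin> range (\<lambda>c. [:[:c:]:])"
  shows "\<forall>Q1\<in>ore_centralizer \<sigma> \<delta> P. \<forall>Q2\<in>ore_centralizer \<sigma> \<delta> P.
           ore_mult \<sigma> \<delta> Q1 Q2 = ore_mult \<sigma> \<delta> Q2 Q1"
proof (intro ballI)
  interpret ore_extension \<sigma> \<delta> using assms(1-3) by unfold_locales
  fix Q1 Q2 assume Q: "Q1 \<in> cent P" "Q2 \<in> cent P"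
  show "Q1 \<star> Q2 = Q2 \<star> Q1"
  proof (cases "degree P \<ge> 1")
    case True
    then show ?thesis using cent_commutative_positive_degree Q by blast
  next
    case False
    then have "degree P = 0" by simp
    then show ?thesis using cent_commutative_degree_0 assms(4) Q by blast
  qed
qed

end
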